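(* Let $0<q<1$, $n\ge 1$, and let $a_j,b_j$ ($1\le j\le n$) be non-negative integers. Then \[ \zeta\big[a_1+2,\{1\}^{b_1},\dots,a_n+2,\{1\}^{b_n}\big] = \zeta\big[b_n+2,\{1\}^{a_n},\,b_{n-1}+2,\{1\}^{a_{n-1}},\dots,b_1+2,\{1\}^{a_1}\big]. \]
   Context: Fix $0<q<1$. For real $x$, $[x]_q := (1-q^x)/(1-q)$. For positive integers $s_1,\dots,s_N$ with $s_1>1$, $\zeta[s_1,\dots,s_N] := \sum_{k_1>\cdots>k_N>0}\prod_{j=1}^N q^{(s_j-1)k_j}/[k_j]_q^{s_j}$ (sum over positive integers). $\{1\}^b$ denotes $b$ consecutive copies of $1$ in an argument list (empty if $b=0$). *)

theory Defs
  imports "HOL-Analysis.Analysis"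
begin

definition qint :: "real \<Rightarrow> real \<Rightarrow> real" where
  "qint q x = (1 - q powr x) / (1 - q)"

definition qmzv_index :: "nat \<Rightarrow> nat list set" where
  "qmzv_index N = {ks. length ks = N \<and> sorted_wrt (>) ks \<and> (\<forall>k\<in>set ks. k > 0)}"

definition qmzv :: "real \<Rightarrow> nat list \<Rightarrow> real" where
  "qmzv q s = (\<Sum>\<^sub>\<infinity>ks\<in>qmzv_index (length s).
      \<Prod>j<length s. q ^ ((s!j - 1) * ks!j) / (qint q (real (ks!j))) ^ (s!j))"

end

theory Submission
  imports Defs
begin

text \<open>Encode an index \<open>(s_1, ..., s_N)\<close> by the word \<open>X^(s_1-1) Y ... X^(s_N-1) Y\<close>; the two sides
  of the corollary then belong to a word and its dual (reversed, with \<open>X\<close> and \<open>Y\<close> swapped).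
  The proof uses connected sums: for words \<open>u, v\<close> let \<open>Z(u, v)\<close> be the sum over \<open>m, n\<close> of
  \<open>f_u(m) C(m, n) f_v(n)\<close>, where \<open>f_w(m)\<close> collects the terms of the multiple sum of \<open>w\<close> with
  first index \<open>m\<close> and \<open>C(m, n) = q^(mn) [m]! [n]! / [m+n]!\<close>. Since \<open>C(m, 0) = 1\<close>, both
  \<open>Z(w, [])\<close> and \<open>Z([], w)\<close> are the q-MZV of \<open>w\<close>. The identity \<open>[m+n] = [m] + q^m [n]\<close> makes
  \<open>C(m, n)/[n] = q^m/[m] (C(m, n-1) - C(m, n))\<close>, which telescopes to \<open>Z(X u, v) = Z(u, Y v)\<close>;
  moving the letters of \<open>w\<close> across one at a time turns \<open>Z(w, [])\<close> into \<open>Z([], dual w)\<close>.\<close>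

section \<open>q-integers and the connector\<close>

definition qnat :: "real \<Rightarrow> nat \<Rightarrow> real" where
  "qnat q k = (1 - q ^ k) / (1 - q)"

definition qfact :: "real \<Rightarrow> nat \<Rightarrow> real" where
  "qfact q k = (\<Prod>i = 1..k. qnat q i)"

definition connector :: "real \<Rightarrow> nat \<Rightarrow> nat \<Rightarrow> real" where
  "connector q m n = q ^ (m * n) * qfact q m * qfact q n / qfact q (m + n)"

lemma qint_of_nat: "0 < q \<Longrightarrow> qint q (real k) = qnat q k"
  by (simp add: qint_def qnat_def powr_realpow)

lemma qnat_0 [simp]: "qnat q 0 = 0"
  by (simp add: qnat_def)

lemma qnat_add: "q < 1 \<Longrightarrow> qnat q (m + k) = qnat q m + q ^ m * qnat q k"
  by (simp add: qnat_def power_add field_simps)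

lemma qnat_ge_1:
  assumes "0 < q" "q < 1" "k \<ge> 1"
  shows "qnat q k \<ge> 1"
proof -
  have "q ^ k \<le> q" using assms power_decreasing[of 1 k q] by simp
  then show ?thesis using assms by (simp add: qnat_def field_simps)
qed

lemma qnat_pos: "0 < q \<Longrightarrow> q < 1 \<Longrightarrow> k \<ge> 1 \<Longrightarrow> qnat q k > 0"
  using qnat_ge_1[of q k] by linarith

lemma qnat_nonneg: "0 < q \<Longrightarrow> q < 1 \<Longrightarrow> qnat q k \<ge> 0"
  using qnat_pos[of q k] by (cases "k = 0") auto

lemma qfact_0 [simp]: "qfact q 0 = 1"
  by (simp add: qfact_def)

lemma qfact_Suc: "qfact q (Suc k) = qfact q k * qnat q (Suc k)"
  by (simp add: qfact_def)

lemma qfact_pos: "0 < q \<Longrightarrow> q < 1 \<Longrightarrow> qfact q k > 0"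
  by (induction k) (auto simp: qfact_Suc qnat_pos)

lemma qfact_le_add: "0 < q \<Longrightarrow> q < 1 \<Longrightarrow> qfact q k \<le> qfact q (j + k)"
proof (induction j)
  case (Suc j)
  have "qfact q (j + k) \<le> qfact q (j + k) * qnat q (Suc (j + k))"
    using qnat_ge_1[of q "Suc (j + k)"] qfact_pos[of q "j + k"] Suc.prems by simp
  then show ?case using Suc by (simp add: qfact_Suc)
qed simp

lemma connector_commute: "connector q m n = connector q n m"
  by (simp add: connector_def mult_ac add.commute)

lemma connector_0_right: "0 < q \<Longrightarrow> q < 1 \<Longrightarrow> connector q m 0 = 1"
  using qfact_pos[of q m] by (simp add: connector_def)

lemma connector_nonneg: "0 < q \<Longrightarrow> q < 1 \<Longrightarrow> connector q m n \<ge> 0"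
  using qfact_pos[of q] by (simp add: connector_def less_imp_le)

lemma connector_Suc:
  assumes q: "0 < q" "q < 1" and m: "m \<ge> 1"
  shows "connector q m (Suc n) / qnat q (Suc n)
       = q ^ m / qnat q m * (connector q m n - connector q m (Suc n))"
proof -
  define A B D where "A = qnat q m" and "B = qnat q (Suc n)" and "D = qnat q (Suc (m + n))"
  have pos: "A > 0" "B > 0" "D > 0" "qfact q (m + n) > 0" "qfact q m > 0" "qfact q n > 0"
    using qnat_pos[OF q] qfact_pos[OF q] m by (auto simp: A_def B_def D_def)
  have D: "D = A + q ^ m * B"
    using qnat_add[of q m "Suc n"] q by (simp add: A_def B_def D_def)
  have Suc_eq: "connector q m (Suc n) = connector q m n * q ^ m * B / D"
    using pos by (simp add: connector_def qfact_Suc B_def D_def power_add field_simps)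
  have "connector q m n - connector q m (Suc n) = connector q m n * A / D"
    using pos by (simp add: Suc_eq D field_simps)
  then show ?thesis
    using pos by (simp add: Suc_eq A_def[symmetric] B_def[symmetric])
qed

lemma connector_tendsto_0:
  assumes q: "0 < q" "q < 1" and m: "m \<ge> 1"
  shows "(\<lambda>n. connector q m n) \<longlonglongrightarrow> 0"
proof (rule tendsto_sandwich[of "\<lambda>_. 0" _ _ "\<lambda>n. qfact q m * (q ^ m) ^ n"])
  show "\<forall>\<^sub>F n in sequentially. 0 \<le> connector q m n"
    using connector_nonneg[OF q] by simp
  have "connector q m n \<le> qfact q m * (q ^ m) ^ n" for n
  proof -
    have "qfact q n / qfact q (m + n) \<le> 1"
      using qfact_le_add[OF q, of n m] qfact_pos[OF q] by simp
    then have "q ^ (m * n) * qfact q m * (qfact q n / qfact q (m + n)) \<le> q ^ (m * n) * qfact q m"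
      using qfact_pos[OF q, of m] q by (intro mult_left_le) auto
    then show ?thesis
      by (simp add: connector_def power_mult mult_ac)
  qed
  then show "\<forall>\<^sub>F n in sequentially. connector q m n \<le> qfact q m * (q ^ m) ^ n"
    by simp
  have "q ^ m < 1"
    using q m by (simp add: power_less_one_iff)
  then show "(\<lambda>n. qfact q m * (q ^ m) ^ n) \<longlonglongrightarrow> 0"
    using q by (intro tendsto_mult_right_zero LIMSEQ_power_zero) simp
qed simp

lemma connector_tail_sum:
  assumes q: "0 < q" "q < 1" and m: "m \<ge> 1"
  shows "(\<integral>\<^sup>+n. ennreal (connector q m n / qnat q n) * indicator {n'<..} n \<partial>count_space UNIV)
       = ennreal (q ^ m / qnat q m * connector q m n')"
proof -
  define h where "h n = (if n' < n then connector q m n / qnat q n else 0)" for n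
  define L where "L = q ^ m / qnat q m * connector q m n'"
  have h_nonneg: "h n \<ge> 0" for n
    using connector_nonneg[OF q] qnat_nonneg[OF q] by (simp add: h_def)
  have "L \<ge> 0"
    using connector_nonneg[OF q] qnat_nonneg[OF q] q by (simp add: L_def)
  have "(\<lambda>i. connector q m (i + n')) \<longlonglongrightarrow> 0"
    using LIMSEQ_ignore_initial_segment[OF connector_tendsto_0[OF q m]] by simp
  then have "(\<lambda>i. connector q m (i + n') - connector q m (Suc i + n')) sums connector q m n'"
    using telescope_sums' by fastforce
  then have "(\<lambda>i. q ^ m / qnat q m * (connector q m (i + n') - connector q m (Suc i + n'))) sums L"
    unfolding L_def by (rule sums_mult)
  moreover have "h (i + Suc n') = q ^ m / qnat q m * (connector q m (i + n') - connector q m (Suc i + n'))" for i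
    using connector_Suc[OF q m, of "i + n'"] by (simp add: h_def)
  ultimately have "(\<lambda>i. h (i + Suc n')) sums L"
    by simp
  moreover have "sum h {..<Suc n'} = 0"
    by (simp add: h_def)
  ultimately have "h sums L"
    using sums_iff_shift[of h "Suc n'" L] by simp
  then have "(\<Sum>i. ennreal (h i)) = ennreal L"
    using h_nonneg \<open>L \<ge> 0\<close> by (simp add: sums_unique[symmetric])
  moreover have "ennreal (connector q m n / qnat q n) * indicator {n'<..} n = ennreal (h n)" for n
    by (simp add: h_def indicator_def)
  ultimately show ?thesis
    by (simp add: nn_integral_count_space_nat L_def)
qed

lemma sum_lessThan_conv_nn_integral:
  fixes f :: "nat \<Rightarrow> ennreal"
  shows   "(\<Sum>i<n. f i) = (\<integral>\<^sup>+i. f i * indicator {..<n} i \<partial>count_space UNIV)"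
proof -
  have "(\<integral>\<^sup>+i. f i * indicator {..<n} i \<partial>count_space UNIV) = (\<integral>\<^sup>+i. f i \<partial>count_space {..<n})"
    by (rule nn_integral_count_space_indicator[symmetric]) simp
  also have "\<dots> = (\<Sum>i<n. f i)"
    by (rule nn_integral_count_space_finite) simp
  finally show ?thesis ..
qed


section \<open>Connected sums of words\<close>

datatype letter = X | Y

fun dual :: "letter \<Rightarrow> letter" where
  "dual X = Y"
| "dual Y = X"

definition dual_word :: "letter list \<Rightarrow> letter list" where
  "dual_word w = rev (map dual w)"

text \<open>\<open>zeta_at q w m\<close> is the part of the multiple sum encoded by \<open>w\<close> whose first index is \<open>m\<close>:
  \<open>X\<close> contributes \<open>q^m/[m]\<close> and keeps the index, \<open>Y\<close> contributes \<open>1/[m]\<close> and passes to a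
  strictly smaller index, and the empty word ends at index \<open>0\<close>.\<close>

fun zeta_at :: "real \<Rightarrow> letter list \<Rightarrow> nat \<Rightarrow> ennreal" where
  "zeta_at q [] m = (if m = 0 then 1 else 0)"
| "zeta_at q (X # w) m = ennreal (q ^ m / qnat q m) * zeta_at q w m"
| "zeta_at q (Y # w) m = ennreal (1 / qnat q m) * (\<Sum>m'<m. zeta_at q w m')"

definition zeta_word :: "real \<Rightarrow> letter list \<Rightarrow> ennreal" where
  "zeta_word q w = (\<integral>\<^sup>+m. zeta_at q w m \<partial>count_space UNIV)"

definition connected_sum :: "real \<Rightarrow> letter list \<Rightarrow> letter list \<Rightarrow> ennreal" where
  "connected_sum q u v = (\<integral>\<^sup>+m. \<integral>\<^sup>+n. zeta_at q u m * ennreal (connector q m n) * zeta_at q v n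
      \<partial>count_space UNIV \<partial>count_space UNIV)"

text \<open>For a leading \<open>X\<close> this relies on the junk value \<open>q^0/[0] = 1/0 = 0\<close>.\<close>

lemma zeta_at_0: "w \<noteq> [] \<Longrightarrow> zeta_at q w 0 = 0"
  by (cases w rule: list.exhaust; cases "hd w") auto

lemma zeta_at_replicate_X:
  "zeta_at q (replicate j X @ w) m = ennreal (q ^ m / qnat q m) ^ j * zeta_at q w m"
  by (induction j) (simp_all add: mult_ac)

lemma connected_sum_commute: "connected_sum q u v = connected_sum q v u"
  unfolding connected_sum_def
  by (subst nn_integral_count_space_nn_integral) (simp_all add: connector_commute mult_ac)

lemma connected_sum_Nil_right:
  assumes q: "0 < q" "q < 1"
  shows "connected_sum q u [] = zeta_word q u"
proof -
  have "zeta_at q u m * ennreal (connector q m n) * zeta_at q [] n = zeta_at q u m * indicator {0} n" for m n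
    using connector_0_right[OF q] by (auto simp: indicator_def)
  then show ?thesis
    by (simp add: connected_sum_def zeta_word_def)
qed

lemma connected_sum_Nil_left: "0 < q \<Longrightarrow> q < 1 \<Longrightarrow> connected_sum q [] v = zeta_word q v"
  using connected_sum_Nil_right connected_sum_commute by metis

lemma nn_integral_connector_Cons_Y:
  assumes q: "0 < q" "q < 1" and m: "m \<ge> 1"
  shows "(\<integral>\<^sup>+n. ennreal (connector q m n) * zeta_at q (Y # v) n \<partial>count_space UNIV)
       = ennreal (q ^ m / qnat q m) * (\<integral>\<^sup>+n. ennreal (connector q m n) * zeta_at q v n \<partial>count_space UNIV)"
proof -
  have "ennreal (connector q m n) * zeta_at q (Y # v) n
      = (\<integral>\<^sup>+n'. zeta_at q v n' * (ennreal (connector q m n / qnat q n) * indicator {n'<..} n)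
          \<partial>count_space UNIV)" for n
  proof -
    have "ennreal (connector q m n) * ennreal (1 / qnat q n) = ennreal (connector q m n / qnat q n)"
      using connector_nonneg[OF q] qnat_nonneg[OF q] by (simp add: ennreal_mult''[symmetric])
    then show ?thesis
      by (simp add: sum_lessThan_conv_nn_integral nn_integral_cmult[symmetric] indicator_def mult_ac
          cong: nn_integral_cong)
  qed
  then have "(\<integral>\<^sup>+n. ennreal (connector q m n) * zeta_at q (Y # v) n \<partial>count_space UNIV)
      = (\<integral>\<^sup>+n. \<integral>\<^sup>+n'. zeta_at q v n' * (ennreal (connector q m n / qnat q n) * indicator {n'<..} n)
          \<partial>count_space UNIV \<partial>count_space UNIV)"
    by (rule nn_integral_cong)
  also have "\<dots> = (\<integral>\<^sup>+n'. \<integral>\<^sup>+n. zeta_at q v n' * (ennreal (connector q m n / qnat q n) * indicator {n'<..} n)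
      \<partial>count_space UNIV \<partial>count_space UNIV)"
    by (rule nn_integral_count_space_nn_integral) simp_all
  also have "\<dots> = (\<integral>\<^sup>+n'. zeta_at q v n' * ennreal (q ^ m / qnat q m * connector q m n') \<partial>count_space UNIV)"
    by (simp add: nn_integral_cmult connector_tail_sum[OF q m])
  also have "\<dots> = ennreal (q ^ m / qnat q m) *
      (\<integral>\<^sup>+n. ennreal (connector q m n) * zeta_at q v n \<partial>count_space UNIV)"
  proof -
    have "ennreal (q ^ m / qnat q m * connector q m n) = ennreal (q ^ m / qnat q m) * ennreal (connector q m n)" for n
      using connector_nonneg[OF q] qnat_nonneg[OF q] q by (intro ennreal_mult'') auto
    then show ?thesis
      by (simp add: nn_integral_cmult[symmetric] mult_ac)
  qed
  finally show ?thesis .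
qed

lemma connected_sum_move_X:
  assumes q: "0 < q" "q < 1" and u0: "zeta_at q u 0 = 0"
  shows "connected_sum q (X # u) v = connected_sum q u (Y # v)"
  unfolding connected_sum_def
proof (rule nn_integral_cong)
  fix m :: nat
  show "(\<integral>\<^sup>+n. zeta_at q (X # u) m * ennreal (connector q m n) * zeta_at q v n \<partial>count_space UNIV)
      = (\<integral>\<^sup>+n. zeta_at q u m * ennreal (connector q m n) * zeta_at q (Y # v) n \<partial>count_space UNIV)"
  proof (cases "m = 0")
    case True
    then show ?thesis
      using u0 by simp
  next
    case False
    let ?C = "\<lambda>n. ennreal (connector q m n)"
    have "(\<integral>\<^sup>+n. zeta_at q (X # u) m * ?C n * zeta_at q v n \<partial>count_space UNIV)
        = zeta_at q u m * (ennreal (q ^ m / qnat q m) * (\<integral>\<^sup>+n. ?C n * zeta_at q v n \<partial>count_space UNIV))"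
      by (simp add: nn_integral_cmult[symmetric] mult_ac)
    also have "\<dots> = zeta_at q u m * (\<integral>\<^sup>+n. ?C n * zeta_at q (Y # v) n \<partial>count_space UNIV)"
      using False nn_integral_connector_Cons_Y[OF q, of m v] by simp
    also have "\<dots> = (\<integral>\<^sup>+n. zeta_at q u m * ?C n * zeta_at q (Y # v) n \<partial>count_space UNIV)"
      by (simp add: nn_integral_cmult[symmetric] mult.assoc)
    finally show ?thesis .
  qed
qed

lemma connected_sum_move_Y:
  "0 < q \<Longrightarrow> q < 1 \<Longrightarrow> zeta_at q v 0 = 0 \<Longrightarrow> connected_sum q (Y # u) v = connected_sum q u (X # v)"
  using connected_sum_move_X connected_sum_commute by metis

lemma connected_sum_move_letter:
  "0 < q \<Longrightarrow> q < 1 \<Longrightarrow> u \<noteq> [] \<Longrightarrow> v \<noteq> [] \<Longrightarrow>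
    connected_sum q (a # u) v = connected_sum q u (dual a # v)"
  by (cases a) (simp_all add: connected_sum_move_X connected_sum_move_Y zeta_at_0)

lemma connected_sum_move_word:
  assumes "0 < q" "q < 1" "u \<noteq> []" "v \<noteq> []"
  shows "connected_sum q (w @ u) v = connected_sum q u (dual_word w @ v)"
  using assms(4)
proof (induction w arbitrary: v)
  case (Cons a w)
  then show ?case
    using connected_sum_move_letter[OF assms(1-2), of "w @ u" v a] assms(3)
    by (simp add: dual_word_def)
qed (simp add: dual_word_def)

text \<open>The first letter moved must be an \<open>X\<close> (a \<open>Y\<close> cannot be moved onto the empty word) and
  the last one a \<open>Y\<close>: this is where admissibility of the word enters.\<close>

theorem zeta_word_duality:
  assumes q: "0 < q" "q < 1"
  shows "zeta_word q (X # w @ [Y]) = zeta_word q (dual_word (X # w @ [Y]))"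
proof -
  have "zeta_word q (X # w @ [Y]) = connected_sum q (X # w @ [Y]) []"
    using connected_sum_Nil_right[OF q] by simp
  also have "\<dots> = connected_sum q (w @ [Y]) [Y]"
    using connected_sum_move_X[OF q zeta_at_0] by simp
  also have "\<dots> = connected_sum q [Y] (dual_word w @ [Y])"
    using connected_sum_move_word[OF q] by simp
  also have "\<dots> = connected_sum q [] (X # dual_word w @ [Y])"
    using connected_sum_move_Y[OF q zeta_at_0] by simp
  also have "\<dots> = zeta_word q (dual_word (X # w @ [Y]))"
    using connected_sum_Nil_left[OF q] by (simp add: dual_word_def)
  finally show ?thesis .
qed


section \<open>q-MZVs as word sums\<close>

text \<open>Both sides are \<open>0\<close> when \<open>f\<close> is not summable on \<open>A\<close>.\<close>

lemma infsum_conv_nn_integral: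
  fixes f :: "'a \<Rightarrow> real"
  assumes nonneg: "\<And>x. x \<in> A \<Longrightarrow> f x \<ge> 0"
  shows "infsum f A = enn2real (\<integral>\<^sup>+x. ennreal (f x) \<partial>count_space A)"
proof (cases "f summable_on A")
  case True
  have "(\<lambda>x. norm (f x)) summable_on A \<longleftrightarrow> f summable_on A"
    using nonneg by (intro summable_on_cong) auto
  then have "Infinite_Set_Sum.abs_summable_on f A"
    using True abs_summable_equivalent by blast
  then have "(\<integral>\<^sup>+x. ennreal (f x) \<partial>count_space A) = ennreal (infsum f A)"
    using nonneg by (simp add: nn_integral_conv_infsetsum infsetsum_infsum)
  moreover have "infsum f A \<ge> 0"
    using nonneg by (rule infsum_nonneg)
  ultimately show ?thesis
    by simp
next
  case False
  have "(\<integral>\<^sup>+x. ennreal (f x) \<partial>count_space A) = \<infinity>"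
  proof (rule ccontr)
    assume "(\<integral>\<^sup>+x. ennreal (f x) \<partial>count_space A) \<noteq> \<infinity>"
    moreover have "(\<integral>\<^sup>+x. ennreal (norm (f x)) \<partial>count_space A) = (\<integral>\<^sup>+x. ennreal (f x) \<partial>count_space A)"
      using nonneg by (intro nn_integral_cong) auto
    ultimately have "integrable (count_space A) f"
      by (intro integrableI_bounded) (simp_all add: less_top)
    then have "Infinite_Set_Sum.abs_summable_on f A"
      by (simp add: abs_summable_on_def)
    then have "Infinite_Sum.abs_summable_on f A"
      using abs_summable_equivalent by blast
    then show False
      using False abs_summable_summable by blast
  qed
  then show ?thesis
    using False by (simp add: infsum_not_exists)
qed

lemma nn_integral_Cons_image:
  fixes F :: "'a list \<Rightarrow> ennreal"
  shows "(\<integral>\<^sup>+x. F (k # x) * indicator A x \<partial>count_space UNIV)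
       = (\<integral>\<^sup>+x. F x * indicator (Cons k ` A) x \<partial>count_space UNIV)"
proof -
  have "(\<integral>\<^sup>+x. F (k # x) * indicator A x \<partial>count_space UNIV) = (\<integral>\<^sup>+x. F (k # x) \<partial>count_space A)"
    by (rule nn_integral_count_space_indicator[symmetric]) simp
  also have "\<dots> = (\<integral>\<^sup>+x. F x \<partial>count_space (Cons k ` A))"
    by (rule nn_integral_bij_count_space) (simp add: bij_betw_def inj_on_def)
  also have "\<dots> = (\<integral>\<^sup>+x. F x * indicator (Cons k ` A) x \<partial>count_space UNIV)"
    by (rule nn_integral_count_space_indicator) simp
  finally show ?thesis .
qed

definition qmzv_index_below :: "nat \<Rightarrow> nat \<Rightarrow> nat list set" where
  "qmzv_index_below N m = {ks \<in> qmzv_index N. \<forall>k \<in> set ks. k < m}"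

lemma qmzv_index_below_Suc:
  "qmzv_index_below (Suc N) m = {ks \<in> qmzv_index (Suc N). hd ks < m}"
  by (auto simp: qmzv_index_below_def qmzv_index_def length_Suc_conv) (meson less_trans)

lemma Cons_qmzv_index_below_iff:
  "(0 < k \<and> ks \<in> Cons k ` qmzv_index_below N k) \<longleftrightarrow> (ks \<in> qmzv_index (Suc N) \<and> k = hd ks)"
  by (cases ks) (auto simp: qmzv_index_below_def qmzv_index_def)

lemma nn_integral_qmzv_index_Suc:
  fixes g :: "nat list \<Rightarrow> ennreal"
  shows "(\<integral>\<^sup>+ks. g ks * indicator {ks \<in> qmzv_index (Suc N). P (hd ks)} ks \<partial>count_space UNIV)
       = (\<integral>\<^sup>+k. indicator {k. P k \<and> 0 < k} k *
            (\<integral>\<^sup>+ks. g (k # ks) * indicator (qmzv_index_below N k) ks \<partial>count_space UNIV) \<partial>count_space UNIV)"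
proof -
  let ?I = "\<lambda>k. indicator {k. P k \<and> 0 < k} k :: ennreal"
  have "(\<integral>\<^sup>+k. ?I k * (\<integral>\<^sup>+ks. g (k # ks) * indicator (qmzv_index_below N k) ks \<partial>count_space UNIV)
          \<partial>count_space UNIV)
      = (\<integral>\<^sup>+k. \<integral>\<^sup>+ks. ?I k * g ks * indicator (Cons k ` qmzv_index_below N k) ks
          \<partial>count_space UNIV \<partial>count_space UNIV)"
    by (simp add: nn_integral_Cons_image nn_integral_cmult[symmetric] mult_ac)
  also have "\<dots> = (\<integral>\<^sup>+ks. \<integral>\<^sup>+k. ?I k * g ks * indicator (Cons k ` qmzv_index_below N k) ks
          \<partial>count_space UNIV \<partial>count_space UNIV)"
    by (rule nn_integral_count_space_nn_integral) simp_all
  also have "\<dots> = (\<integral>\<^sup>+ks. g ks * indicator {ks \<in> qmzv_index (Suc N). P (hd ks)} ks \<partial>count_space UNIV)"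
  proof (rule nn_integral_cong)
    fix ks :: "nat list"
    have "?I k * g ks * indicator (Cons k ` qmzv_index_below N k) ks
        = g ks * indicator {ks \<in> qmzv_index (Suc N). P (hd ks)} ks * indicator {hd ks} k" for k
      using Cons_qmzv_index_below_iff[of k ks N] by (auto simp: indicator_def)
    then show "(\<integral>\<^sup>+k. ?I k * g ks * indicator (Cons k ` qmzv_index_below N k) ks \<partial>count_space UNIV)
        = g ks * indicator {ks \<in> qmzv_index (Suc N). P (hd ks)} ks"
      by simp
  qed
  finally show ?thesis ..
qed

definition qmzv_term :: "real \<Rightarrow> nat list \<Rightarrow> nat list \<Rightarrow> real" where
  "qmzv_term q s ks = (\<Prod>j<length s. q ^ ((s!j - 1) * ks!j) / (qint q (real (ks!j))) ^ (s!j))"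

definition qmzv_below :: "real \<Rightarrow> nat list \<Rightarrow> nat \<Rightarrow> ennreal" where
  "qmzv_below q s m =
    (\<integral>\<^sup>+ks. ennreal (qmzv_term q s ks) * indicator (qmzv_index_below (length s) m) ks \<partial>count_space UNIV)"

definition qmzv_word :: "nat list \<Rightarrow> letter list" where
  "qmzv_word s = concat (map (\<lambda>x. replicate (x - 1) X @ [Y]) s)"

lemma qmzv_term_nonneg: "0 < q \<Longrightarrow> q < 1 \<Longrightarrow> qmzv_term q s ks \<ge> 0"
  unfolding qmzv_term_def using qnat_nonneg[of q]
  by (intro prod_nonneg) (auto simp: qint_of_nat)

lemma qmzv_term_Nil [simp]: "qmzv_term q [] ks = 1"
  by (simp add: qmzv_term_def)

lemma qmzv_term_Cons:
  "qmzv_term q (x # s) (k # ks) = q ^ ((x - 1) * k) / (qint q (real k)) ^ x * qmzv_term q s ks"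
  unfolding qmzv_term_def length_Cons prod.lessThan_Suc_shift by (simp del: prod.lessThan_Suc)

lemma qmzv_word_Nil [simp]: "qmzv_word [] = []"
  by (simp add: qmzv_word_def)

lemma qmzv_word_Cons: "qmzv_word (x # s) = replicate (x - 1) X @ Y # qmzv_word s"
  by (simp add: qmzv_word_def)

lemma qmzv_word_append [simp]: "qmzv_word (s @ t) = qmzv_word s @ qmzv_word t"
  by (simp add: qmzv_word_def)

lemma ennreal_qmzv_factor:
  assumes q: "0 < q" "q < 1" and x: "x \<ge> 1" and k: "k \<ge> 1"
  shows "ennreal (q ^ ((x - 1) * k) / (qint q (real k)) ^ x)
       = ennreal (q ^ k / qnat q k) ^ (x - 1) * ennreal (1 / qnat q k)"
proof -
  have pos: "qnat q k > 0"
    using qnat_pos[OF q k] .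
  have "ennreal (q ^ ((x - 1) * k) / (qint q (real k)) ^ x)
      = ennreal ((q ^ k / qnat q k) ^ (x - 1) * (1 / qnat q k))"
    using pos q x by (cases x) (simp_all add: qint_of_nat power_divide power_mult[symmetric] mult.commute)
  also have "\<dots> = ennreal ((q ^ k / qnat q k) ^ (x - 1)) * ennreal (1 / qnat q k)"
    using pos q by (intro ennreal_mult'') auto
  finally show ?thesis
    using pos q by (simp add: ennreal_power)
qed

text \<open>The predicate \<open>P\<close> on the first index lets the same step serve the truncated sums
  (\<open>P k = (k < m)\<close>) in the induction and the full sum (\<open>P k = True\<close>) afterwards.\<close>

lemma nn_integral_qmzv_term_Cons:
  assumes q: "0 < q" "q < 1" and x: "x \<ge> 1"
    and below: "\<And>m. m \<ge> 1 \<Longrightarrow> qmzv_below q s m = (\<Sum>m'<m. zeta_at q (qmzv_word s) m')"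
  shows "(\<integral>\<^sup>+ks. ennreal (qmzv_term q (x # s) ks) *
            indicator {ks \<in> qmzv_index (Suc (length s)). P (hd ks)} ks \<partial>count_space UNIV)
       = (\<integral>\<^sup>+k. zeta_at q (qmzv_word (x # s)) k * indicator {k. P k} k \<partial>count_space UNIV)"
proof -
  have head: "(\<integral>\<^sup>+ks. ennreal (qmzv_term q (x # s) (k # ks)) *
      indicator (qmzv_index_below (length s) k) ks \<partial>count_space UNIV) = zeta_at q (qmzv_word (x # s)) k"
    if k: "k \<ge> 1" for k
  proof -
    define w where "w = ennreal (q ^ ((x - 1) * k) / (qint q (real k)) ^ x)"
    have "ennreal (qmzv_term q (x # s) (k # ks)) = w * ennreal (qmzv_term q s ks)" for ks
      unfolding qmzv_term_Cons w_def using qmzv_term_nonneg[OF q] q qnat_nonneg[OF q]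
      by (intro ennreal_mult'') (auto simp: qint_of_nat)
    then have "(\<integral>\<^sup>+ks. ennreal (qmzv_term q (x # s) (k # ks)) *
          indicator (qmzv_index_below (length s) k) ks \<partial>count_space UNIV) = w * qmzv_below q s k"
      by (simp add: qmzv_below_def nn_integral_cmult[symmetric] mult.assoc)
    also have "\<dots> = zeta_at q (qmzv_word (x # s)) k"
      unfolding w_def ennreal_qmzv_factor[OF q x k] below[OF k]
      by (simp add: qmzv_word_Cons zeta_at_replicate_X mult_ac)
    finally show ?thesis .
  qed
  have "indicator {k. P k \<and> 0 < k} k * (\<integral>\<^sup>+ks. ennreal (qmzv_term q (x # s) (k # ks)) *
          indicator (qmzv_index_below (length s) k) ks \<partial>count_space UNIV)
      = zeta_at q (qmzv_word (x # s)) k * indicator {k. P k} k" for k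
    using head[of k] zeta_at_0[of "qmzv_word (x # s)" q]
    by (cases "k = 0") (auto simp: indicator_def qmzv_word_Cons)
  then show ?thesis
    by (subst nn_integral_qmzv_index_Suc) (simp only:)
qed

lemma qmzv_below_eq_sum_zeta_at:
  assumes q: "0 < q" "q < 1"
  shows "(\<forall>x \<in> set s. x \<ge> 1) \<Longrightarrow> m \<ge> 1 \<Longrightarrow> qmzv_below q s m = (\<Sum>m'<m. zeta_at q (qmzv_word s) m')"
proof (induction s arbitrary: m)
  case Nil
  have "qmzv_index_below 0 m = {[]}"
    by (auto simp: qmzv_index_below_def qmzv_index_def)
  then show ?case
    using Nil.prems by (simp add: qmzv_below_def lessThan_def)
next
  case (Cons x s)
  have "qmzv_below q (x # s) m = (\<integral>\<^sup>+ks. ennreal (qmzv_term q (x # s) ks) *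
          indicator {ks \<in> qmzv_index (Suc (length s)). hd ks < m} ks \<partial>count_space UNIV)"
    by (simp add: qmzv_below_def qmzv_index_below_Suc)
  also have "\<dots> = (\<integral>\<^sup>+k. zeta_at q (qmzv_word (x # s)) k * indicator {..<m} k \<partial>count_space UNIV)"
    using nn_integral_qmzv_term_Cons[OF q, of x s] Cons by (simp add: lessThan_def)
  also have "\<dots> = (\<Sum>m'<m. zeta_at q (qmzv_word (x # s)) m')"
    by (rule sum_lessThan_conv_nn_integral[symmetric])
  finally show ?case .
qed

theorem qmzv_eq_zeta_word:
  assumes q: "0 < q" "q < 1" and s: "\<forall>x \<in> set s. x \<ge> 1" "s \<noteq> []"
  shows "qmzv q s = enn2real (zeta_word q (qmzv_word s))"
proof -
  obtain x s' where s': "s = x # s'"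
    using s(2) by (cases s) auto
  have "qmzv q s = enn2real (\<integral>\<^sup>+ks. ennreal (qmzv_term q s ks) \<partial>count_space (qmzv_index (length s)))"
    unfolding qmzv_def qmzv_term_def[symmetric]
    using qmzv_term_nonneg[OF q] by (rule infsum_conv_nn_integral)
  also have "(\<integral>\<^sup>+ks. ennreal (qmzv_term q s ks) \<partial>count_space (qmzv_index (length s)))
      = (\<integral>\<^sup>+ks. ennreal (qmzv_term q (x # s') ks) *
          indicator {ks \<in> qmzv_index (Suc (length s')). True} ks \<partial>count_space UNIV)"
    by (simp add: s' nn_integral_count_space_indicator)
  also have "\<dots> = zeta_word q (qmzv_word s)"
    using nn_integral_qmzv_term_Cons[OF q, of x s' "\<lambda>_. True"] qmzv_below_eq_sum_zeta_at[OF q, of s'] s s'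
    by (simp add: zeta_word_def)
  finally show ?thesis .
qed


lemma qmzv_word_admissible:
  assumes "x \<ge> 2"
  obtains w where "qmzv_word (x # s) = X # w @ [Y]"
proof -
  obtain k where x: "x = Suc (Suc k)"
    using assms by (metis add_2_eq_Suc le_Suc_ex)
  show ?thesis
  proof (cases s rule: rev_cases)
    case Nil
    then show ?thesis
      using that[of "replicate k X"] by (simp add: qmzv_word_Cons x)
  next
    case (snoc t y)
    then show ?thesis
      using that[of "replicate k X @ Y # qmzv_word t @ replicate (y - 1) X"]
      by (simp add: qmzv_word_Cons x)
  qed
qed

theorem qmzv_duality:
  assumes q: "0 < q" "q < 1"
    and s: "\<forall>x \<in> set s. x \<ge> 1" "s \<noteq> []" "hd s \<ge> 2"
    and t: "\<forall>x \<in> set t. x \<ge> 1"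
    and dual: "dual_word (qmzv_word s) = qmzv_word t"
  shows "qmzv q s = qmzv q t"
proof -
  obtain w where w: "qmzv_word s = X # w @ [Y]"
    using qmzv_word_admissible[of "hd s" "tl s"] s(2,3) by auto
  then have "t \<noteq> []"
    using dual by (auto simp: dual_word_def)
  have "qmzv q s = enn2real (zeta_word q (qmzv_word s))"
    using q s(1,2) by (rule qmzv_eq_zeta_word)
  also have "\<dots> = enn2real (zeta_word q (qmzv_word t))"
    using zeta_word_duality[OF q, of w] w dual by simp
  also have "\<dots> = qmzv q t"
    using qmzv_eq_zeta_word[OF q t \<open>t \<noteq> []\<close>] by simp
  finally show ?thesis .
qed

lemma dual_word_concat: "dual_word (concat ws) = concat (map dual_word (rev ws))"
  by (induction ws) (simp_all add: dual_word_def)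

lemma qmzv_word_concat: "qmzv_word (concat ss) = concat (map qmzv_word ss)"
  by (induction ss) simp_all

lemma qmzv_word_replicate_1: "qmzv_word (replicate b 1) = replicate b Y"
  by (induction b) (simp_all add: qmzv_word_Cons)

lemma qmzv_word_block: "qmzv_word ((a + 2) # replicate b 1) = replicate (Suc a) X @ Y # replicate b Y"
  unfolding qmzv_word_Cons qmzv_word_replicate_1 by simp

lemma dual_word_qmzv_word_block:
  "dual_word (qmzv_word ((a + 2) # replicate b 1)) = qmzv_word ((b + 2) # replicate a 1)"
  unfolding qmzv_word_block
  by (simp add: dual_word_def replicate_append_same[symmetric] del: replicate_append_same)

theorem corollary3p2:
  fixes q :: real and n :: nat and a b :: "nat \<Rightarrow> nat"
  assumes "0 < q" "q < 1" "n \<ge> 1"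
  shows "qmzv q (concat (map (\<lambda>j. (a j + 2) # replicate (b j) 1) [1..<n+1]))
       = qmzv q (concat (map (\<lambda>j. (b j + 2) # replicate (a j) 1) (rev [1..<n+1])))"
proof -
  define s where "s = concat (map (\<lambda>j. (a j + 2) # replicate (b j) 1) [1..<n+1])"
  define t where "t = concat (map (\<lambda>j. (b j + 2) # replicate (a j) 1) (rev [1..<n+1]))"
  have "[1..<n+1] = 1 # [Suc 1..<n+1]"
    using assms(3) by (intro upt_conv_Cons) simp
  then have "s \<noteq> []" "hd s \<ge> 2"
    by (simp_all add: s_def)
  moreover have "\<forall>x \<in> set s. x \<ge> 1" "\<forall>x \<in> set t. x \<ge> 1"
    by (auto simp: s_def t_def)
  moreover have "dual_word (qmzv_word s) = qmzv_word t"
    unfolding s_def t_def qmzv_word_concat dual_word_concat rev_map map_map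
    by (simp only: comp_def dual_word_qmzv_word_block)
  ultimately have "qmzv q s = qmzv q t"
    using qmzv_duality[OF assms(1,2)] by blast
  then show ?thesis
    by (simp only: s_def t_def)
qed

end
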